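(* Let $G$ be a looped simple graph with vertices listed as $v_1,\dots,v_n$. The following are equivalent: (1) there is a sequence of $n-1$ pendant-twin reductions starting from $G$ in which the $i$-th reduction deletes the vertex $v_i$; (2) there is a sequence of $n-1$ isotropic parallel reductions starting from $M[IAS(G)]$ in which the $i$-th reduction removes the vertex triple of $v_i$.
   Context: A looped simple graph is a finite graph in which each vertex carries at most one loop and no two distinct vertices are joined by more than one edge. "Adjacent"/"neighbors" refer only to distinct vertices joined by a non-loop edge; $N_G(v)$ is the set of neighbors of $v$; the degree of $v$ is $|N_G(v)|$; $v$ is isolated if $N_G(v)=\emptyset$. $A(G)$ is the $V(G)\times V(G)$ matrix over $GF(2)$ with diagonal entry $1$ exactly at looped vertices and off-diagonal entry $1$ exactly for adjacent pairs. $IAS(G)=(I\mid A(G)\mid A(G)+I)$ over $GF(2)$, rows indexed by $V(G)$; the $v$-columns of the three blocks are labelled $\phi_G(v),\chi_G(v),\psi_G(v)$. $M[IAS(G)]$ is the binary column matroid of $IAS(G)$ on $W(G)=\{\phi_G(v),\chi_G(v),\psi_G(v):v\in V(G)\}$; $\tau_G(v)=\{\phi_G(v),\chi_G(v),\psi_G(v)\}$ is the vertex triple of $v$. Pendant-twin reduction of $G$: delete an isolated vertex; or delete a vertex $v$ that has a twin $w\neq v$, i.e. either $N_G(v)=N_G(w)\neq\emptyset$ (nonadjacent twins) or $N_G(v)\cup\{v\}=N_G(w)\cup\{w\}$ (adjacent twins); or delete a vertex of degree $1$. Isotropic parallel reduction: two elements are parallel in a matroid if both are loops or if they form a $2$-element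 circuit. If $\rho\ne\sigma$ are parallel elements of $M[IAS(G)]$ and $\rho$ is not of the form $\phi_G(\cdot)$, say $\rho\in\tau_G(v)$, the isotropic parallel reduction corresponding to $\rho,\sigma$ is the matroid obtained from $M[IAS(G)]$ by contracting $\phi_G(v)$ and deleting the other two elements of $\tau_G(v)$ (it "removes the vertex triple of $v$"); this matroid equals $M[IAS(G-v)]$ with the same element labels, so reductions can be iterated. *)

theory Defs
  imports Main "HOL-Library.Z2"
begin

text \<open>A looped simple graph: finite vertex set V, symmetric irreflexive adjacency E
on V (non-loop edges), and a set L \<subseteq> V of looped vertices (at most one loop each).\<close>

definition looped_graph :: "'a set \<Rightarrow> ('a \<Rightarrow> 'a \<Rightarrow> bool) \<Rightarrow> 'a set \<Rightarrow> bool" where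
  "looped_graph V E L \<longleftrightarrow> finite V \<and> L \<subseteq> V \<and>
     (\<forall>x y. E x y \<longrightarrow> x \<in> V \<and> y \<in> V) \<and> (\<forall>x y. E x y \<longrightarrow> E y x) \<and> (\<forall>x. \<not> E x x)"

definition nbhd :: "'a set \<Rightarrow> ('a \<Rightarrow> 'a \<Rightarrow> bool) \<Rightarrow> 'a \<Rightarrow> 'a set" where
  "nbhd V E v = {w \<in> V. w \<noteq> v \<and> E v w}"

definition del_V :: "'a set \<Rightarrow> 'a set \<Rightarrow> 'a set" where "del_V V X = V - X"
definition del_E :: "('a \<Rightarrow> 'a \<Rightarrow> bool) \<Rightarrow> 'a set \<Rightarrow> 'a \<Rightarrow> 'a \<Rightarrow> bool" where
  "del_E E X = (\<lambda>x y. E x y \<and> x \<notin> X \<and> y \<notin> X)"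
definition del_L :: "'a set \<Rightarrow> 'a set \<Rightarrow> 'a set" where "del_L L X = L - X"

definition pendant_twin_reduction :: "'a set \<Rightarrow> ('a \<Rightarrow> 'a \<Rightarrow> bool) \<Rightarrow> 'a set \<Rightarrow> 'a \<Rightarrow> bool" where
  "pendant_twin_reduction V E L v \<longleftrightarrow> v \<in> V \<and>
     (nbhd V E v = {}
      \<or> (\<exists>w\<in>V. w \<noteq> v \<and>
           ((nbhd V E v = nbhd V E w \<and> nbhd V E v \<noteq> {})
            \<or> nbhd V E v \<union> {v} = nbhd V E w \<union> {w}))
      \<or> card (nbhd V E v) = 1)"

datatype 'a elem = Phi 'a | Chi 'a | Psi 'a

definition ground :: "'a set \<Rightarrow> 'a elem set" where
  "ground V = {Phi v | v. v \<in> V} \<union> {Chi v | v. v \<in> V} \<union> {Psi v | v. v \<in> V}"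

definition vtriple :: "'a \<Rightarrow> 'a elem set" where
  "vtriple v = {Phi v, Chi v, Psi v}"

definition adj_mat :: "('a \<Rightarrow> 'a \<Rightarrow> bool) \<Rightarrow> 'a set \<Rightarrow> 'a \<Rightarrow> 'a \<Rightarrow> bit" where
  "adj_mat E L x y = (if x = y then (if x \<in> L then 1 else 0) else (if E x y then 1 else 0))"

text \<open>Columns of IAS(G) = (I | A(G) | A(G)+I); rows indexed by V (row w of column e).\<close>
fun ias_col :: "('a \<Rightarrow> 'a \<Rightarrow> bool) \<Rightarrow> 'a set \<Rightarrow> 'a elem \<Rightarrow> 'a \<Rightarrow> bit" where
  "ias_col E L (Phi v) w = (if w = v then 1 else 0)"
| "ias_col E L (Chi v) w = adj_mat E L w v"
| "ias_col E L (Psi v) w = adj_mat E L w v + (if w = v then 1 else 0)"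

text \<open>Dependent sets of the binary column matroid M[IAS(G)]: the columns indexed by S
are linearly dependent over GF(2), i.e. some nonempty subfamily sums to zero.\<close>
definition ias_dependent :: "'a set \<Rightarrow> ('a \<Rightarrow> 'a \<Rightarrow> bool) \<Rightarrow> 'a set \<Rightarrow> 'a elem set \<Rightarrow> bool" where
  "ias_dependent V E L S \<longleftrightarrow> S \<subseteq> ground V \<and>
     (\<exists>T\<subseteq>S. T \<noteq> {} \<and> (\<forall>w\<in>V. (\<Sum>e\<in>T. ias_col E L e w) = 0))"

definition ias_circuit :: "'a set \<Rightarrow> ('a \<Rightarrow> 'a \<Rightarrow> bool) \<Rightarrow> 'a set \<Rightarrow> 'a elem set \<Rightarrow> bool" where
  "ias_circuit V E L C \<longleftrightarrow> ias_dependent V E L C \<and> (\<forall>D. D \<subset> C \<longrightarrow> \<not> ias_dependent V E L D)"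

definition ias_parallel :: "'a set \<Rightarrow> ('a \<Rightarrow> 'a \<Rightarrow> bool) \<Rightarrow> 'a set \<Rightarrow> 'a elem \<Rightarrow> 'a elem \<Rightarrow> bool" where
  "ias_parallel V E L \<rho> \<sigma> \<longleftrightarrow>
     (ias_circuit V E L {\<rho>} \<and> ias_circuit V E L {\<sigma>})
     \<or> (\<rho> \<noteq> \<sigma> \<and> ias_circuit V E L {\<rho>, \<sigma>})"

text \<open>An isotropic parallel reduction of M[IAS(G)] removing the vertex triple of v:
there are parallel elements rho \<noteq> sigma with rho not of the form phi and rho in tau(v).
(The resulting matroid is M[IAS(G - v)].)\<close>
definition iso_parallel_reduction :: "'a set \<Rightarrow> ('a \<Rightarrow> 'a \<Rightarrow> bool) \<Rightarrow> 'a set \<Rightarrow> 'a \<Rightarrow> bool" where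
  "iso_parallel_reduction V E L v \<longleftrightarrow> v \<in> V \<and>
     (\<exists>\<rho>\<in>ground V. \<exists>\<sigma>\<in>ground V. \<rho> \<noteq> \<sigma> \<and> ias_parallel V E L \<rho> \<sigma> \<and>
        \<rho> \<in> vtriple v \<and> \<rho> \<noteq> Phi v)"

text \<open>Sequences of n-1 reductions along the list vs = [v_1,...,v_n]: the i-th reduction
(0-indexed i) acts on G - {v_1..v_i} and deletes vs!i.\<close>
definition pt_sequence :: "'a set \<Rightarrow> ('a \<Rightarrow> 'a \<Rightarrow> bool) \<Rightarrow> 'a set \<Rightarrow> 'a list \<Rightarrow> bool" where
  "pt_sequence V E L vs \<longleftrightarrow> (\<forall>i < length vs - 1.
     let X = set (take i vs) in
     pendant_twin_reduction (del_V V X) (del_E E X) (del_L L X) (vs ! i))"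

definition ipr_sequence :: "'a set \<Rightarrow> ('a \<Rightarrow> 'a \<Rightarrow> bool) \<Rightarrow> 'a set \<Rightarrow> 'a list \<Rightarrow> bool" where
  "ipr_sequence V E L vs \<longleftrightarrow> (\<forall>i < length vs - 1.
     let X = set (take i vs) in
     iso_parallel_reduction (del_V V X) (del_E E X) (del_L L X) (vs ! i))"

end

theory Submission
  imports Defs
begin

text \<open>Over GF(2) a column is determined by its support, so two distinct elements of
M[IAS(G)] are parallel exactly when their columns have equal support. The support of
\<open>\<phi>(v)\<close> is \<open>{v}\<close>; those of \<open>\<chi>(v)\<close> and \<open>\<psi>(v)\<close> are the open neighbourhood \<open>N(v)\<close> and the
closed neighbourhood \<open>N(v) \<union> {v}\<close>, in an order depending on whether \<open>v\<close> is looped. An open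
neighbourhood never equals a closed one, and the remaining coincidences are exactly the
pendant-twin cases: \<open>N(v) \<union> {v} = {v}\<close> (v isolated), \<open>N(v) = N(w)\<close> (nonadjacent twins),
\<open>N(v) \<union> {v} = N(w) \<union> {w}\<close> (adjacent twins) and \<open>N(v) = {u}\<close> (degree one). So the two kinds
of reduction are available for the same vertices of every graph, in particular at every
step of the two sequences.\<close>

definition col_support :: "'a set \<Rightarrow> ('a \<Rightarrow> 'a \<Rightarrow> bool) \<Rightarrow> 'a set \<Rightarrow> 'a elem \<Rightarrow> 'a set" where
  "col_support V E L e = {w \<in> V. ias_col E L e w = 1}"

lemma col_eq_on_iff_col_support_eq:
  "(\<forall>w\<in>V. ias_col E L e w = ias_col E L f w) \<longleftrightarrow> col_support V E L e = col_support V E L f"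
proof
  assume "col_support V E L e = col_support V E L f"
  then have ones: "ias_col E L e w = 1 \<longleftrightarrow> ias_col E L f w = 1" if "w \<in> V" for w
    using that by (auto simp: col_support_def set_eq_iff)
  show "\<forall>w\<in>V. ias_col E L e w = ias_col E L f w"
  proof
    fix w assume "w \<in> V"
    then show "ias_col E L e w = ias_col E L f w"
      using ones[of w] by (cases "ias_col E L e w"; cases "ias_col E L f w") auto
  qed
qed (auto simp: col_support_def)

lemma col_zero_on_iff_col_support_empty:
  "(\<forall>w\<in>V. ias_col E L e w = 0) \<longleftrightarrow> col_support V E L e = {}"
  unfolding col_support_def by auto

lemma bit_add_eq_0_iff: "a + b = 0 \<longleftrightarrow> a = b" for a b :: bit
  by (cases a; cases b) simp_all

lemma ex_nonempty_subset_doubleton: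
  "(\<exists>T\<subseteq>{r, s}. T \<noteq> {} \<and> P T) \<longleftrightarrow> P {r} \<or> P {s} \<or> P {r, s}"
proof
  assume "\<exists>T\<subseteq>{r, s}. T \<noteq> {} \<and> P T"
  then obtain T where "T \<subseteq> {r, s}" "T \<noteq> {}" "P T" by blast
  moreover from this(1,2) have "T = {r} \<or> T = {s} \<or> T = {r, s}" by auto
  ultimately show "P {r} \<or> P {s} \<or> P {r, s}" by blast
qed blast

lemma ias_dependent_singleton_iff:
  "ias_dependent V E L {r} \<longleftrightarrow> r \<in> ground V \<and> col_support V E L r = {}"
  unfolding ias_dependent_def col_zero_on_iff_col_support_empty[symmetric]
  by (auto simp: subset_singleton_iff)

lemma ias_dependent_doubleton_iff:
  assumes "r \<noteq> s"
  shows "ias_dependent V E L {r, s} \<longleftrightarrow> r \<in> ground V \<and> s \<in> ground V \<and>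
    (col_support V E L r = {} \<or> col_support V E L s = {} \<or> col_support V E L r = col_support V E L s)"
proof -
  have sum_zero: "(\<Sum>e\<in>{r, s}. ias_col E L e w) = 0 \<longleftrightarrow> ias_col E L r w = ias_col E L s w" for w
    using assms by (simp del: add_bit_eq_xor add: bit_add_eq_0_iff)
  have pair: "(\<forall>w\<in>V. (\<Sum>e\<in>{r, s}. ias_col E L e w) = 0) \<longleftrightarrow>
      col_support V E L r = col_support V E L s"
    unfolding sum_zero by (rule col_eq_on_iff_col_support_eq)
  have single: "(\<forall>w\<in>V. (\<Sum>e\<in>{x}. ias_col E L e w) = 0) \<longleftrightarrow> col_support V E L x = {}" for x
    by (simp add: col_zero_on_iff_col_support_empty)
  show ?thesis
    unfolding ias_dependent_def ex_nonempty_subset_doubleton insert_subset pair single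
    by simp
qed

lemma ias_circuit_singleton_iff:
  "ias_circuit V E L {r} \<longleftrightarrow> r \<in> ground V \<and> col_support V E L r = {}"
  unfolding ias_circuit_def ias_dependent_singleton_iff by (auto simp: ias_dependent_def)

lemma ias_circuit_doubleton_iff:
  assumes "r \<noteq> s"
  shows "ias_circuit V E L {r, s} \<longleftrightarrow> r \<in> ground V \<and> s \<in> ground V \<and>
    col_support V E L r \<noteq> {} \<and> col_support V E L r = col_support V E L s"
proof -
  have proper_subsets: "D \<subset> {r, s} \<longleftrightarrow> D = {} \<or> D = {r} \<or> D = {s}" for D
    using assms by auto
  have "\<not> ias_dependent V E L {}"
    by (simp add: ias_dependent_def)
  then show ?thesis
    unfolding ias_circuit_def proper_subsets ias_dependent_doubleton_iff[OF assms]
    by (auto simp: ias_dependent_singleton_iff)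
qed

lemma ias_parallel_iff:
  assumes "r \<noteq> s" "r \<in> ground V" "s \<in> ground V"
  shows "ias_parallel V E L r s \<longleftrightarrow> col_support V E L r = col_support V E L s"
  unfolding ias_parallel_def ias_circuit_singleton_iff ias_circuit_doubleton_iff[OF assms(1)]
  using assms by blast

text \<open>The element of \<open>\<tau>(v)\<close> whose column is the open, resp. closed, neighbourhood of \<open>v\<close>:
a loop at \<open>v\<close> puts a 1 on the diagonal of \<open>A(G)\<close> and removes it from \<open>A(G) + I\<close>.\<close>

definition open_nbhd_col :: "'a set \<Rightarrow> 'a \<Rightarrow> 'a elem" where
  "open_nbhd_col L v = (if v \<in> L then Psi v else Chi v)"

definition closed_nbhd_col :: "'a set \<Rightarrow> 'a \<Rightarrow> 'a elem" where
  "closed_nbhd_col L v = (if v \<in> L then Chi v else Psi v)"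

lemma nbhd_col_eq_iff [simp]:
  "open_nbhd_col L u = open_nbhd_col L v \<longleftrightarrow> u = v"
  "closed_nbhd_col L u = closed_nbhd_col L v \<longleftrightarrow> u = v"
  "open_nbhd_col L u \<noteq> closed_nbhd_col L u"
  "open_nbhd_col L u \<noteq> Phi v"
  "closed_nbhd_col L u \<noteq> Phi v"
  by (auto simp: open_nbhd_col_def closed_nbhd_col_def)

lemma Chi_Psi_eq_nbhd_cols: "{Chi v, Psi v} = {open_nbhd_col L v, closed_nbhd_col L v}"
  by (auto simp: open_nbhd_col_def closed_nbhd_col_def)

lemma in_groundI:
  "v \<in> V \<Longrightarrow> Phi v \<in> ground V"
  "v \<in> V \<Longrightarrow> open_nbhd_col L v \<in> ground V"
  "v \<in> V \<Longrightarrow> closed_nbhd_col L v \<in> ground V"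
  by (simp_all add: ground_def open_nbhd_col_def closed_nbhd_col_def)

lemma ground_elemE:
  assumes "s \<in> ground V"
  obtains (Phi) u where "u \<in> V" "s = Phi u"
    | (open_nbhd) u where "u \<in> V" "s = open_nbhd_col L u"
    | (closed_nbhd) u where "u \<in> V" "s = closed_nbhd_col L u"
  using assms Chi_Psi_eq_nbhd_cols[of _ L] unfolding ground_def by blast

lemma col_support_Phi: "u \<in> V \<Longrightarrow> col_support V E L (Phi u) = {u}"
  by (auto simp: col_support_def)

lemma col_support_open_nbhd_col:
  "symp E \<Longrightarrow> col_support V E L (open_nbhd_col L v) = nbhd V E v"
  by (auto simp: col_support_def open_nbhd_col_def nbhd_def adj_mat_def dest: sympD)

lemma col_support_closed_nbhd_col:
  "symp E \<Longrightarrow> v \<in> V \<Longrightarrow> col_support V E L (closed_nbhd_col L v) = insert v (nbhd V E v)"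
  by (auto simp: col_support_def closed_nbhd_col_def nbhd_def adj_mat_def dest: sympD)

lemma nbhd_cols_iff_Chi_Psi:
  "r \<in> {open_nbhd_col L v, closed_nbhd_col L v} \<longleftrightarrow> r \<in> vtriple v \<and> r \<noteq> Phi v"
  unfolding Chi_Psi_eq_nbhd_cols[symmetric] vtriple_def by auto

lemma iso_parallel_reductionI:
  assumes "v \<in> V" "r \<in> {open_nbhd_col L v, closed_nbhd_col L v}" "s \<in> ground V"
    "r \<noteq> s" "col_support V E L r = col_support V E L s"
  shows "iso_parallel_reduction V E L v"
proof -
  have "r \<in> ground V"
    using assms(1,2) in_groundI by auto
  moreover have "r \<in> vtriple v" "r \<noteq> Phi v"
    using nbhd_cols_iff_Chi_Psi[THEN iffD1, OF assms(2)] by simp_all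
  moreover have "ias_parallel V E L r s"
    using ias_parallel_iff[OF assms(4) \<open>r \<in> ground V\<close> assms(3)] assms(5) by blast
  ultimately show ?thesis
    unfolding iso_parallel_reduction_def using assms(1,3,4) by blast
qed

lemma iso_parallel_reductionE:
  assumes "iso_parallel_reduction V E L v"
  obtains r s where "v \<in> V" "r \<in> {open_nbhd_col L v, closed_nbhd_col L v}" "s \<in> ground V"
    "r \<noteq> s" "col_support V E L r = col_support V E L s"
proof -
  from assms obtain r s where v: "v \<in> V" and r: "r \<in> ground V" "r \<in> vtriple v" "r \<noteq> Phi v"
    and s: "s \<in> ground V" and "r \<noteq> s" and par: "ias_parallel V E L r s"
    unfolding iso_parallel_reduction_def by blast
  from r(2,3) have "r \<in> {open_nbhd_col L v, closed_nbhd_col L v}"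
    by (intro nbhd_cols_iff_Chi_Psi[THEN iffD2] conjI)
  moreover from par have "col_support V E L r = col_support V E L s"
    using ias_parallel_iff[OF \<open>r \<noteq> s\<close> r(1) s] by blast
  ultimately show thesis
    using that v s \<open>r \<noteq> s\<close> by blast
qed

lemma nbhd_ne_insert_nbhd:
  assumes "symp E" "v \<in> V"
  shows "nbhd V E v \<noteq> insert u (nbhd V E u)"
proof
  assume eq: "nbhd V E v = insert u (nbhd V E u)"
  then have "u \<in> nbhd V E v" by auto
  then have "v \<in> nbhd V E u" using assms by (auto simp: nbhd_def dest: sympD)
  then have "v \<in> nbhd V E v" using eq by auto
  then show False by (simp add: nbhd_def)
qed

lemma iso_parallel_reduction_if_pendant_twin_reduction:
  assumes "symp E" and pt: "pendant_twin_reduction V E L v"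
  shows "iso_parallel_reduction V E L v"
proof -
  have v: "v \<in> V" using pt by (simp add: pendant_twin_reduction_def)
  note supports = col_support_Phi col_support_open_nbhd_col[OF \<open>symp E\<close>]
    col_support_closed_nbhd_col[OF \<open>symp E\<close>]
  from pt consider (isolated) "nbhd V E v = {}"
    | (twins) w where "w \<in> V" "w \<noteq> v" "nbhd V E v = nbhd V E w"
    | (adjacent_twins) w where "w \<in> V" "w \<noteq> v" "nbhd V E v \<union> {v} = nbhd V E w \<union> {w}"
    | (pendant) u where "nbhd V E v = {u}"
    unfolding pendant_twin_reduction_def is_singleton_altdef[symmetric] is_singleton_def by blast
  then show ?thesis
  proof cases
    case isolated
    with v show ?thesis
      by (intro iso_parallel_reductionI[of v V "closed_nbhd_col L v" L "Phi v"])
        (simp_all add: supports in_groundI)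
  next
    case (twins w)
    with v show ?thesis
      by (intro iso_parallel_reductionI[of v V "open_nbhd_col L v" L "open_nbhd_col L w"])
        (simp_all add: supports in_groundI)
  next
    case (adjacent_twins w)
    with v show ?thesis
      by (intro iso_parallel_reductionI[of v V "closed_nbhd_col L v" L "closed_nbhd_col L w"])
        (simp_all add: supports in_groundI)
  next
    case (pendant u)
    then have "u \<in> V" by (auto simp: nbhd_def)
    with v pendant show ?thesis
      by (intro iso_parallel_reductionI[of v V "open_nbhd_col L v" L "Phi u"])
        (simp_all add: supports in_groundI)
  qed
qed

lemma pendant_twin_reduction_if_iso_parallel_reduction:
  assumes "symp E" and iso: "iso_parallel_reduction V E L v"
  shows "pendant_twin_reduction V E L v"
proof -
  obtain r s where v: "v \<in> V" and r: "r \<in> {open_nbhd_col L v, closed_nbhd_col L v}"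
    and s: "s \<in> ground V" and "r \<noteq> s" and eq: "col_support V E L r = col_support V E L s"
    using iso by (rule iso_parallel_reductionE)
  note supports = col_support_Phi col_support_open_nbhd_col[OF \<open>symp E\<close>]
    col_support_closed_nbhd_col[OF \<open>symp E\<close>]
  from r consider (open_nbhd) "r = open_nbhd_col L v" | (closed_nbhd) "r = closed_nbhd_col L v"
    by blast
  note r_cases = this
  show ?thesis
  proof (cases "nbhd V E v = {}")
    case True
    with v show ?thesis by (simp add: pendant_twin_reduction_def)
  next
    case False
    from s show ?thesis
    proof (cases rule: ground_elemE[where L = L])
      case (Phi u)
      from r_cases show ?thesis
      proof cases
        case open_nbhd
        with Phi eq have "nbhd V E v = {u}" by (simp add: supports)
        with v show ?thesis by (simp add: pendant_twin_reduction_def)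
      next
        case closed_nbhd
        with Phi eq v have "nbhd V E v \<subseteq> {v}" by (auto simp: supports)
        with False show ?thesis by (auto simp: nbhd_def)
      qed
    next
      case (open_nbhd u)
      from r_cases show ?thesis
      proof cases
        case open_nbhd
        with \<open>s = open_nbhd_col L u\<close> \<open>r \<noteq> s\<close> eq
        have "u \<noteq> v" "nbhd V E v = nbhd V E u" by (simp_all add: supports)
        with v \<open>u \<in> V\<close> False show ?thesis
          unfolding pendant_twin_reduction_def by blast
      next
        case closed_nbhd
        with \<open>s = open_nbhd_col L u\<close> eq v have "nbhd V E u = insert v (nbhd V E v)"
          by (simp add: supports)
        with nbhd_ne_insert_nbhd[OF \<open>symp E\<close> \<open>u \<in> V\<close>] show ?thesis by blast
      qed
    next
      case (closed_nbhd u)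
      from r_cases show ?thesis
      proof cases
        case open_nbhd
        with \<open>s = closed_nbhd_col L u\<close> eq \<open>u \<in> V\<close>
        have "nbhd V E v = insert u (nbhd V E u)" by (simp add: supports)
        with nbhd_ne_insert_nbhd[OF \<open>symp E\<close> v] show ?thesis by blast
      next
        case closed_nbhd
        with \<open>s = closed_nbhd_col L u\<close> \<open>r \<noteq> s\<close> eq v \<open>u \<in> V\<close>
        have "u \<noteq> v" "nbhd V E v \<union> {v} = nbhd V E u \<union> {u}" by (simp_all add: supports)
        with v \<open>u \<in> V\<close> show ?thesis
          unfolding pendant_twin_reduction_def by blast
      qed
    qed
  qed
qed

lemma pendant_twin_reduction_iff_iso_parallel_reduction:
  assumes "symp E"
  shows "pendant_twin_reduction V E L v \<longleftrightarrow> iso_parallel_reduction V E L v"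
proof
  show "iso_parallel_reduction V E L v" if "pendant_twin_reduction V E L v"
    using assms that by (rule iso_parallel_reduction_if_pendant_twin_reduction)
  show "pendant_twin_reduction V E L v" if "iso_parallel_reduction V E L v"
    using assms that by (rule pendant_twin_reduction_if_iso_parallel_reduction)
qed

theorem corollary9p7:
  fixes V :: "'a set" and E :: "'a \<Rightarrow> 'a \<Rightarrow> bool" and L :: "'a set" and vs :: "'a list"
  assumes "looped_graph V E L"
    and "distinct vs" and "set vs = V"
  shows "pt_sequence V E L vs \<longleftrightarrow> ipr_sequence V E L vs"
proof -
  have "symp E"
    using assms(1) by (auto simp: looped_graph_def intro: sympI)
  then have "symp (del_E E X)" for X
    by (auto simp: del_E_def intro: sympI dest: sympD)
  then show ?thesis
    unfolding pt_sequence_def ipr_sequence_def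
    by (simp add: pendant_twin_reduction_iff_iso_parallel_reduction)
qed

end
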